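(* Let the shallow network have activation $\psi\in\{\mathrm{sigmoid},\tanh\}$ and let $\mathcal{X}\subseteq\mathbb{R}^{V_0}$ contain a non-empty open set. Then for every $n\in\mathbb{N}_0$ and every $m=(m_\emptyset,m_0,\dots,m_n)\in\mathbb{N}_0^{n+2}$, \[ \mathcal{E}(\mathcal{X})=\mathcal{E}_P^m(\mathcal{X})=\mathcal{E}_0 . \]
   Context: Shallow network: finite pairwise disjoint sets $V_0,V_1,V_2$ and activation $\psi$; $E=(V_0\times V_1)\cup(V_1\times V_2)$; $\Theta=\mathbb{R}^E\times\mathbb{R}^{V_1\cup V_2}$, $\theta=(w,\beta)$; $w_{j\bullet}=(w_{jl})_{l\in V_2}$, $w_{\bullet j}=(w_{ij})_{i\in V_0}$. $\mathrm{sigmoid}(x)=1/(1+e^{-x})$. (In the paper $\mathcal{X}$ is the support of the input distribution.) Efficient parameters: $\theta$ is efficient on $\mathcal{X}$ if (a) $w_{k\bullet}\not\equiv0$ for all $k\in V_1$ and (b) the only $(\lambda_j)_{j\in V_1\cup\{\emptyset\}}$ with $\lambda_\emptyset+\sum_{j\in V_1}\lambda_j\psi(\beta_j+\sum_{i\in V_0}x_iw_{ij})=0$ for all $x\in\mathcal{X}$ is $\lambda\equiv0$; $\mathcal{E}(\mathcal{X})$ is the set of efficient parameters. Polynomial efficiency: $\theta$ is $m$-polynomially efficient on $\mathcal{X}$ if $w_{k\bullet}\not\equiv0$ for all $k\in V_1$, $\psi$ is $n$ times differentiable, and the only polynomials $P^{(\emptyset)}$ of degree $\le m_\emptyset$ and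 $P^{(k)}_j$ ($j\in V_1$, $0\le k\le n$) of degree $\le m_k$ on $\mathbb{R}^{V_0}$ with $P^{(\emptyset)}(x)+\sum_{j\in V_1}\sum_{k=0}^nP^{(k)}_j(x)\psi^{(k)}(\beta_j+\sum_{i}x_iw_{ij})=0$ for all $x\in\mathcal{X}$ are zero; $\mathcal{E}_P^m(\mathcal{X})$ is the set of such $\theta$. $\mathcal{E}_0=\{\theta\in\Theta:\ w_{j\bullet}\neq0\ \forall j\in V_1;\ w_{\bullet j}\neq0\ \forall j\in V_1;\ (w_{\bullet i},\beta_i)\neq\pm(w_{\bullet j},\beta_j)\ \forall i\neq j\in V_1\}$. *)

theory Defs
  imports "HOL-Analysis.Analysis"
begin

definition sigmoid :: "real \<Rightarrow> real" where
  "sigmoid x = 1 / (1 + exp (- x))"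

definition edges :: "'v set \<Rightarrow> 'v set \<Rightarrow> 'v set \<Rightarrow> ('v \<times> 'v) set" where
  "edges V0 V1 V2 = (V0 \<times> V1) \<union> (V1 \<times> V2)"

text \<open>Parameter space Theta = R^E x R^(V1 u V2); parameters are (w, beta), with values
  outside the index sets fixed to undefined (extensional functions).\<close>
definition Theta :: "'v set \<Rightarrow> 'v set \<Rightarrow> 'v set \<Rightarrow> ((('v \<times> 'v) \<Rightarrow> real) \<times> ('v \<Rightarrow> real)) set" where
  "Theta V0 V1 V2 = {(w, \<beta>). w \<in> extensional (edges V0 V1 V2) \<and> \<beta> \<in> extensional (V1 \<union> V2)}"

definition preact :: "'v set \<Rightarrow> (('v \<times> 'v) \<Rightarrow> real) \<Rightarrow> ('v \<Rightarrow> real) \<Rightarrow> 'v \<Rightarrow> ('v \<Rightarrow> real) \<Rightarrow> real" where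
  "preact V0 w \<beta> j x = \<beta> j + (\<Sum>i\<in>V0. x i * w (i, j))"

definition efficient_set ::
  "(real \<Rightarrow> real) \<Rightarrow> 'v set \<Rightarrow> 'v set \<Rightarrow> 'v set \<Rightarrow> ('v \<Rightarrow> real) set
     \<Rightarrow> ((('v \<times> 'v) \<Rightarrow> real) \<times> ('v \<Rightarrow> real)) set" where
  "efficient_set \<psi> V0 V1 V2 X = {(w, \<beta>) \<in> Theta V0 V1 V2.
     (\<forall>k\<in>V1. \<exists>l\<in>V2. w (k, l) \<noteq> 0) \<and>
     (\<forall>(l0::real) (lam::'v \<Rightarrow> real).
        (\<forall>x\<in>X. l0 + (\<Sum>j\<in>V1. lam j * \<psi> (preact V0 w \<beta> j x)) = 0)
        \<longrightarrow> l0 = 0 \<and> (\<forall>j\<in>V1. lam j = 0))}"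

text \<open>Multi-indices (exponent vectors) on V0 of total degree at most d; a polynomial of
  degree at most d on R^V0 is given by a coefficient function on these multi-indices.\<close>
definition multi_idx :: "'v set \<Rightarrow> nat \<Rightarrow> ('v \<Rightarrow> nat) set" where
  "multi_idx V0 d = {\<alpha>. \<alpha> \<in> V0 \<rightarrow>\<^sub>E {..d} \<and> sum \<alpha> V0 \<le> d}"

definition poly_eval :: "'v set \<Rightarrow> nat \<Rightarrow> (('v \<Rightarrow> nat) \<Rightarrow> real) \<Rightarrow> ('v \<Rightarrow> real) \<Rightarrow> real" where
  "poly_eval V0 d c x = (\<Sum>\<alpha>\<in>multi_idx V0 d. c \<alpha> * (\<Prod>i\<in>V0. x i ^ \<alpha> i))"

text \<open>m-polynomially efficient parameters E_P^m(X), m = (mE, m 0, ..., m n).\<close>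
definition poly_efficient_set ::
  "(real \<Rightarrow> real) \<Rightarrow> nat \<Rightarrow> nat \<Rightarrow> (nat \<Rightarrow> nat) \<Rightarrow> 'v set \<Rightarrow> 'v set \<Rightarrow> 'v set
     \<Rightarrow> ('v \<Rightarrow> real) set \<Rightarrow> ((('v \<times> 'v) \<Rightarrow> real) \<times> ('v \<Rightarrow> real)) set" where
  "poly_efficient_set \<psi> n mE m V0 V1 V2 X = {(w, \<beta>) \<in> Theta V0 V1 V2.
     (\<forall>k\<in>V1. \<exists>l\<in>V2. w (k, l) \<noteq> 0) \<and>
     (\<forall>k<n. (deriv ^^ k) \<psi> differentiable_on UNIV) \<and>
     (\<forall>(cE :: ('v \<Rightarrow> nat) \<Rightarrow> real) (c :: 'v \<Rightarrow> nat \<Rightarrow> ('v \<Rightarrow> nat) \<Rightarrow> real).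
        (\<forall>x\<in>X. poly_eval V0 mE cE x
            + (\<Sum>j\<in>V1. \<Sum>k\<le>n. poly_eval V0 (m k) (c j k) x
                 * (deriv ^^ k) \<psi> (preact V0 w \<beta> j x)) = 0)
        \<longrightarrow> (\<forall>\<alpha>\<in>multi_idx V0 mE. cE \<alpha> = 0) \<and>
            (\<forall>j\<in>V1. \<forall>k\<le>n. \<forall>\<alpha>\<in>multi_idx V0 (m k). c j k \<alpha> = 0))}"

definition E0_set ::
  "'v set \<Rightarrow> 'v set \<Rightarrow> 'v set \<Rightarrow> ((('v \<times> 'v) \<Rightarrow> real) \<times> ('v \<Rightarrow> real)) set" where
  "E0_set V0 V1 V2 = {(w, \<beta>) \<in> Theta V0 V1 V2.
     (\<forall>j\<in>V1. \<exists>l\<in>V2. w (j, l) \<noteq> 0) \<and>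
     (\<forall>j\<in>V1. \<exists>i\<in>V0. w (i, j) \<noteq> 0) \<and>
     (\<forall>i\<in>V1. \<forall>j\<in>V1. i \<noteq> j \<longrightarrow>
        \<not> ((\<forall>l\<in>V0. w (l, i) = w (l, j)) \<and> \<beta> i = \<beta> j) \<and>
        \<not> ((\<forall>l\<in>V0. w (l, i) = - w (l, j)) \<and> \<beta> i = - \<beta> j))}"

end

(* Write psi(z) = Q (sigmoid (c z)) with deg Q = 1; then the k-th derivative of psi is
   R_k (sigmoid (c z)) with deg R_k = k + 1.  Restricted to a line x + t v in a generic direction,
   a polynomial relation between the functions psi^(k) (<w_j, x> + beta_j) becomes a relation
   q(t) + sum_j sum_e p_je(t) sigmoid (a_j t + b_j)^e = 0 with (a_j, b_j) pairwise distinct up to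
   sign.  It continues analytically to the complex plane minus the poles of the shifted sigmoids,
   and looking at a pole of highest order that no other neuron shares shows that all p_je vanish;
   the triangular shape of the R_k then makes every coefficient polynomial vanish at x.
   Conversely, a parameter outside E_0 visibly satisfies a nontrivial linear relation, because
   psi(-z) + psi(z) is constant. *)

theory Submission
  imports Defs "HOL-Complex_Analysis.Complex_Analysis" "HOL-Computational_Algebra.Polynomial"
begin

section \<open>Sigmoid-type activations and their derivatives\<close>

lemma sigmoid_has_real_derivative:
  "(sigmoid has_real_derivative sigmoid x * (1 - sigmoid x)) (at x)"
proof -
  have pos: "1 + exp (- x) \<noteq> 0" by (smt (verit) exp_gt_zero)
  have "((\<lambda>x. 1 / (1 + exp (- x))) has_real_derivative exp (- x) / (1 + exp (- x))\<^sup>2) (at x)"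
    using pos by (auto intro!: derivative_eq_intros simp: power2_eq_square field_simps)
  moreover have "exp (- x) / (1 + exp (- x))\<^sup>2 = sigmoid x * (1 - sigmoid x)"
    using pos by (simp add: sigmoid_def power2_eq_square field_simps)
  ultimately show ?thesis by (simp add: sigmoid_def[abs_def])
qed

lemma sigmoid_minus: "sigmoid (- x) = 1 - sigmoid x"
proof -
  have "1 + exp (- x) \<noteq> 0" "1 + exp x \<noteq> 0" by (smt (verit) exp_gt_zero)+
  moreover have "exp x * exp (- x) = 1" by (simp add: exp_minus_inverse)
  ultimately show ?thesis unfolding sigmoid_def by (simp add: field_simps)
qed

lemma tanh_eq_sigmoid: "tanh x = 2 * sigmoid (2 * x) - 1"
proof -
  have "1 + exp (- 2 * x) \<noteq> 0" by (smt (verit) exp_gt_zero)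
  then show ?thesis unfolding tanh_real_altdef sigmoid_def by (simp add: field_simps)
qed

text \<open>The polynomial \<open>[:0, 1, -1:]\<close> is \<open>X (1 - X)\<close>, which comes from
  \<open>sigmoid' = sigmoid (1 - sigmoid)\<close>.\<close>

primrec sigmoid_deriv_poly :: "real \<Rightarrow> real poly \<Rightarrow> nat \<Rightarrow> real poly" where
  "sigmoid_deriv_poly c Q 0 = Q"
| "sigmoid_deriv_poly c Q (Suc k) = smult c (pderiv (sigmoid_deriv_poly c Q k) * [:0, 1, -1:])"

lemma has_real_derivative_poly_sigmoid:
  "((\<lambda>x. poly Q (sigmoid (c * x))) has_real_derivative
     poly (smult c (pderiv Q * [:0, 1, -1:])) (sigmoid (c * x))) (at x)"
proof -
  have "((\<lambda>x. sigmoid (c * x)) has_real_derivative sigmoid (c * x) * (1 - sigmoid (c * x)) * c) (at x)"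
    by (rule DERIV_chain2[OF sigmoid_has_real_derivative]) (auto intro!: derivative_eq_intros)
  from DERIV_chain2[OF poly_DERIV this]
  show ?thesis by (simp add: algebra_simps)
qed

lemma deriv_iter_poly_sigmoid:
  "(deriv ^^ k) (\<lambda>x. poly Q (sigmoid (c * x)))
     = (\<lambda>x. poly (sigmoid_deriv_poly c Q k) (sigmoid (c * x)))"
proof (induction k)
  case 0
  then show ?case by simp
next
  case (Suc k)
  then show ?case
    using DERIV_imp_deriv[OF has_real_derivative_poly_sigmoid] by simp
qed

lemma differentiable_deriv_iter_poly_sigmoid:
  "(deriv ^^ k) (\<lambda>x. poly Q (sigmoid (c * x))) differentiable_on UNIV"
  unfolding deriv_iter_poly_sigmoid differentiable_on_def
  using has_real_derivative_poly_sigmoid real_differentiable_def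
  by (metis differentiable_at_withinI)

lemma degree_sigmoid_deriv_poly:
  assumes "c \<noteq> 0" "degree Q > 0"
  shows "degree (sigmoid_deriv_poly c Q k) = degree Q + k"
proof (induction k)
  case 0
  then show ?case by simp
next
  case (Suc k)
  then have "pderiv (sigmoid_deriv_poly c Q k) \<noteq> 0"
    using assms(2) by (simp add: pderiv_eq_0_iff)
  then have "degree (pderiv (sigmoid_deriv_poly c Q k) * [:0, 1, -1:])
      = degree (pderiv (sigmoid_deriv_poly c Q k)) + degree [:0, 1, -1::real:]"
    by (intro degree_mult_eq) auto
  moreover have "degree (sigmoid_deriv_poly c Q (Suc k))
      = degree (pderiv (sigmoid_deriv_poly c Q k) * [:0, 1, -1:])"
    using assms(1) by simp
  ultimately show ?case using Suc assms by (simp add: degree_pderiv)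
qed

lemma activation_eq_poly_sigmoid:
  assumes "\<psi> = sigmoid \<or> \<psi> = tanh"
  obtains c Q where "c \<noteq> 0" "degree Q = 1" "\<psi> = (\<lambda>x. poly Q (sigmoid (c * x)))"
proof (cases "\<psi> = sigmoid")
  case True
  then show ?thesis by (intro that[of 1 "[:0, 1:]"]) auto
next
  case False
  then have "\<psi> = (\<lambda>x. poly [:-1, 2:] (sigmoid (2 * x)))"
    using assms by (auto simp: tanh_eq_sigmoid)
  then show ?thesis by (intro that[of 2 "[:-1, 2:]"]) auto
qed

lemma activation_minus_add:
  assumes "\<psi> = sigmoid \<or> \<psi> = tanh"
  obtains C where "\<And>z. \<psi> (- z) + \<psi> z = C"
  using assms by (auto simp: sigmoid_minus)

lemma sum_poly_eq_sum_powers: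
  fixes R :: "'k \<Rightarrow> 'a::comm_semiring_1 poly"
  assumes "\<forall>k\<in>K. degree (R k) \<le> N"
  shows "(\<Sum>k\<in>K. P k * poly (R k) s) = (\<Sum>e\<le>N. (\<Sum>k\<in>K. coeff (R k) e * P k) * s ^ e)"
proof -
  have "poly (R k) s = (\<Sum>e\<le>N. coeff (R k) e * s ^ e)" if "k \<in> K" for k
    unfolding poly_altdef using assms that
    by (intro sum.mono_neutral_left) (auto simp: coeff_eq_0)
  then have "(\<Sum>k\<in>K. P k * poly (R k) s) = (\<Sum>k\<in>K. \<Sum>e\<le>N. P k * (coeff (R k) e * s ^ e))"
    by (simp add: sum_distrib_left)
  also have "\<dots> = (\<Sum>e\<le>N. (\<Sum>k\<in>K. coeff (R k) e * P k) * s ^ e)"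
    by (subst sum.swap) (simp add: sum_distrib_left sum_distrib_right mult_ac)
  finally show ?thesis .
qed

lemma graded_coeff_system_zero:
  fixes R :: "nat \<Rightarrow> 'a::idom poly"
  assumes deg: "\<forall>k\<le>n. degree (R k) = k + 1"
    and eqs: "\<forall>e\<in>{1..n+1}. (\<Sum>k\<le>n. coeff (R k) e * C k) = 0"
  shows "\<forall>k\<le>n. C k = 0"
proof (rule ccontr)
  assume nonzero: "\<not> ?thesis"
  define k0 where "k0 = Max {k. k \<le> n \<and> C k \<noteq> 0}"
  have "k0 \<in> {k. k \<le> n \<and> C k \<noteq> 0}"
    unfolding k0_def using nonzero by (intro Max_in) auto
  then have k0: "k0 \<le> n" "C k0 \<noteq> 0" by simp_all
  have others: "coeff (R k) (k0 + 1) * C k = 0" if "k \<le> n" "k \<noteq> k0" for k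
  proof (cases "k < k0")
    case True
    then show ?thesis using deg that by (simp add: coeff_eq_0)
  next
    case False
    have "C k = 0"
    proof (rule ccontr)
      assume "C k \<noteq> 0"
      then have "k \<le> k0" unfolding k0_def using that by (intro Max_ge) auto
      then show False using False that by simp
    qed
    then show ?thesis by simp
  qed
  have "(\<Sum>k\<le>n. coeff (R k) (k0 + 1) * C k)
      = coeff (R k0) (k0 + 1) * C k0 + (\<Sum>k\<in>{..n} - {k0}. coeff (R k) (k0 + 1) * C k)"
    using k0 by (intro sum.remove) auto
  also have "(\<Sum>k\<in>{..n} - {k0}. coeff (R k) (k0 + 1) * C k) = 0"
    using others by (intro sum.neutral) auto
  finally have "(\<Sum>k\<le>n. coeff (R k) (k0 + 1) * C k) = coeff (R k0) (k0 + 1) * C k0" by simp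
  moreover have "coeff (R k0) (k0 + 1) \<noteq> 0"
    using deg k0 by (metis leading_coeff_0_iff degree_0 add_eq_0_iff_both_eq_0 one_neq_zero)
  ultimately show False using eqs k0 by auto
qed

section \<open>The complex sigmoid and its poles\<close>

definition csigmoid :: "complex \<Rightarrow> complex" where
  "csigmoid z = 1 / (1 + exp (- z))"

lemma csigmoid_of_real: "csigmoid (of_real r) = of_real (sigmoid r)"
  unfolding csigmoid_def sigmoid_def by (simp flip: exp_of_real)

lemma exp_eq_minus_one_iff:
  "exp (z::complex) = -1 \<longleftrightarrow> (\<exists>k::int. z = \<i> * pi * of_int (2 * k + 1))"
proof -
  have "exp z = -1 \<longleftrightarrow> exp z = exp (\<i> * pi)" by simp
  also have "\<dots> \<longleftrightarrow> (\<exists>k::int. z = \<i> * pi + (of_int (2 * k) * pi) * \<i>)" by (rule exp_eq)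
  also have "\<dots> \<longleftrightarrow> (\<exists>k::int. z = \<i> * pi * of_int (2 * k + 1))" by (simp add: algebra_simps)
  finally show ?thesis .
qed

definition csigmoid_poles :: "'j set \<Rightarrow> ('j \<Rightarrow> real) \<Rightarrow> ('j \<Rightarrow> real) \<Rightarrow> complex set" where
  "csigmoid_poles J a b = {t. \<exists>j\<in>J. 1 + exp (- (of_real (a j) * t + of_real (b j))) = 0}"

lemma of_real_notin_csigmoid_poles: "of_real t \<notin> csigmoid_poles J a b"
proof -
  have "1 + exp (- (of_real (a j) * of_real t + of_real (b j))) \<noteq> (0::complex)" for j
  proof -
    have "1 + exp (- (a j * t + b j)) \<noteq> 0" by (smt (verit) exp_gt_zero)
    then have "(of_real (1 + exp (- (a j * t + b j))) :: complex) \<noteq> 0" by (metis of_real_eq_0_iff)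
    then show ?thesis by (simp flip: exp_of_real)
  qed
  then show ?thesis by (simp add: csigmoid_poles_def)
qed

lemma countable_csigmoid_poles:
  assumes "finite J" "\<forall>j\<in>J. a j \<noteq> 0"
  shows "countable (csigmoid_poles J a b)"
proof -
  let ?pole = "\<lambda>(j, k::int). (- (\<i> * pi * of_int (2 * k + 1)) - of_real (b j)) / of_real (a j)
    :: complex"
  have "csigmoid_poles J a b \<subseteq> ?pole ` (J \<times> UNIV)"
  proof
    fix t assume "t \<in> csigmoid_poles J a b"
    then obtain j where j: "j \<in> J" "exp (- (of_real (a j) * t + of_real (b j))) = -1"
      by (auto simp: csigmoid_poles_def add_eq_0_iff)
    then obtain k where "- (of_real (a j) * t + of_real (b j)) = \<i> * pi * of_int (2 * k + 1)"
      by (auto simp: exp_eq_minus_one_iff)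
    then have "t * of_real (a j) = - (\<i> * pi * of_int (2 * k + 1)) - of_real (b j)"
      by (metis add_diff_cancel_right' minus_minus mult.commute)
    then have "t = ?pole (j, k)"
      using assms(2) j(1) by (simp add: eq_divide_eq)
    then show "t \<in> ?pole ` (J \<times> UNIV)" using j(1) by blast
  qed
  moreover have "countable (?pole ` (J \<times> UNIV))"
    using assms(1) by (intro countable_image countable_SIGMA) (auto intro: countable_finite)
  ultimately show ?thesis by (rule countable_subset)
qed

lemma open_csigmoid_poles_compl:
  assumes "finite J"
  shows "open (UNIV - csigmoid_poles J a b)"
proof -
  have "UNIV - csigmoid_poles J a b = (\<Inter>j\<in>J. {t. 1 + exp (- (of_real (a j) * t + of_real (b j))) \<noteq> 0})"
    by (auto simp: csigmoid_poles_def)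
  moreover have "open {t. 1 + exp (- (of_real (a j) * t + of_real (b j))) \<noteq> (0::complex)}" for j
    by (intro open_Collect_neq continuous_intros)
  ultimately show ?thesis using assms by (simp add: open_INT)
qed

lemma islimpt_cocountable:
  fixes P :: "'a::real_normed_algebra_1 set"
  assumes "countable P"
  shows "z islimpt (UNIV - P)"
proof (rule islimpt_approachable[THEN iffD2], intro allI impI)
  fix e :: real assume e: "e > 0"
  let ?L = "(\<lambda>r::real. z + of_real r) ` {0<..<e}"
  have "uncountable {0<..<e}" using e by (simp add: uncountable_open_interval)
  moreover have "inj_on (\<lambda>r::real. z + of_real r) {0<..<e}" by (auto simp: inj_on_def)
  ultimately have "uncountable ?L" using countable_image_inj_on by blast
  then obtain r where "r \<in> {0<..<e}" "z + of_real r \<notin> P"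
    using assms by (metis (no_types, lifting) countable_subset image_subset_iff subsetI)
  then show "\<exists>x'\<in>UNIV - P. x' \<noteq> z \<and> dist x' z < e"
    by (intro bexI[of _ "z + of_real r"]) (auto simp: dist_norm)
qed

lemma limit_eq_0_if_vanishing_off_countable:
  fixes f :: "'a::real_normed_algebra_1 \<Rightarrow> 'b::{t2_space, zero}"
  assumes "countable P" "\<forall>t\<in>UNIV - P. f t = 0" "(f \<longlongrightarrow> l) (at z)"
  shows "l = 0"
proof -
  have "at z within (UNIV - P) \<noteq> bot"
    using islimpt_cocountable[OF assms(1)] by (simp add: trivial_limit_within)
  moreover have "\<forall>\<^sub>F t in at z within UNIV - P. f t = 0"
    unfolding eventually_at_filter by (rule always_eventually) (use assms(2) in simp)
  ultimately show ?thesis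
    by (intro tendsto_unique[OF _ tendsto_within_subset[OF assms(3) subset_UNIV]] tendsto_eventually)
qed

lemma csigmoid_residue:
  fixes t0 :: complex
  assumes "A \<noteq> 0" and pole: "1 + exp (- (of_real A * t0 + of_real B)) = 0"
  shows "((\<lambda>t. (t - t0) * csigmoid (of_real A * t + of_real B)) \<longlongrightarrow> 1 / of_real A) (at t0)"
proof -
  define f :: "complex \<Rightarrow> complex" where "f t = 1 + exp (- (of_real A * t + of_real B))" for t
  have "(f has_field_derivative - of_real A * exp (- (of_real A * t0 + of_real B))) (at t0)"
    unfolding f_def by (auto intro!: derivative_eq_intros)
  then have "(f has_field_derivative of_real A) (at t0)"
    using pole by (simp add: add_eq_0_iff)
  moreover have "f t0 = 0" using pole by (simp add: f_def)
  ultimately have "((\<lambda>t. f t / (t - t0)) \<longlongrightarrow> of_real A) (at t0)"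
    by (simp add: has_field_derivative_iff)
  then have "((\<lambda>t. inverse (f t / (t - t0))) \<longlongrightarrow> inverse (of_real A)) (at t0)"
    using assms(1) by (intro tendsto_inverse) auto
  moreover have "(\<lambda>t. inverse (f t / (t - t0))) = (\<lambda>t. (t - t0) * csigmoid (of_real A * t + of_real B))"
    by (simp add: fun_eq_iff csigmoid_def f_def)
  ultimately show ?thesis by (simp add: inverse_eq_divide)
qed

lemma csigmoid_pole_coincidence:
  assumes A: "A \<noteq> 0" and t0: "t0 = (\<i> * pi * of_int n - of_real B) / of_real A"
    and pole: "1 + exp (- (of_real a * t0 + of_real b)) = 0"
  shows "a * B = b * A \<and> a / A * of_int n \<in> \<int>"
proof -
  obtain k :: int where k: "- (of_real a * t0 + of_real b) = \<i> * pi * of_int (2 * k + 1)"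
    using pole by (auto simp: add_eq_0_iff exp_eq_minus_one_iff)
  have "Re t0 = - B / A" "Im t0 = pi * n / A"
    using A by (simp_all add: t0 Re_divide Im_divide power2_eq_square)
  then have re: "a * (- B / A) + b = 0" and im: "a * (pi * n / A) = - (pi * of_int (2 * k + 1))"
    using arg_cong[OF k, of Re] arg_cong[OF k, of Im] by simp_all
  have "a * B = b * A" using re A by (simp add: field_simps)
  moreover have "pi * (a / A * of_int n) = pi * of_int (- (2 * k + 1))"
    using im by (simp add: algebra_simps)
  then have "a / A * of_int n = of_int (- (2 * k + 1))"
    by (metis mult_left_cancel pi_neq_zero)
  ultimately show ?thesis by (metis Ints_of_int)
qed

lemma tendsto_csigmoid_pole_power:
  fixes t0 :: complex and p :: "complex poly"
  assumes A: "A \<noteq> 0" and pole: "1 + exp (- (of_real A * t0 + of_real B)) = 0" and "d \<le> D"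
  shows "((\<lambda>t. (t - t0) ^ D * (poly p t * csigmoid (of_real A * t + of_real B) ^ d))
           \<longlongrightarrow> (if d = D then poly p t0 / of_real A ^ D else 0)) (at t0)"
proof -
  have "((\<lambda>t. (t - t0) ^ (D - d) * poly p t * ((t - t0) * csigmoid (of_real A * t + of_real B)) ^ d)
          \<longlongrightarrow> (t0 - t0) ^ (D - d) * poly p t0 * (1 / of_real A) ^ d) (at t0)"
    by (intro tendsto_intros csigmoid_residue[OF A pole])
  moreover have "(t - t0) ^ (D - d) * poly p t * ((t - t0) * csigmoid (of_real A * t + of_real B)) ^ d
      = (t - t0) ^ D * (poly p t * csigmoid (of_real A * t + of_real B) ^ d)" for t
  proof -
    have "(t - t0) ^ D = (t - t0) ^ (D - d) * (t - t0) ^ d"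
      using \<open>d \<le> D\<close> by (simp flip: power_add)
    then show ?thesis by (simp add: power_mult_distrib)
  qed
  moreover have "(t0 - t0) ^ (D - d) * poly p t0 * (1 / of_real A) ^ d
      = (if d = D then poly p t0 / of_real A ^ D else 0)"
    using \<open>d \<le> D\<close> by (simp add: power_one_over)
  ultimately show ?thesis by simp
qed

lemma tendsto_csigmoid_term_off_pole:
  fixes t0 :: complex and p :: "complex poly"
  assumes "1 + exp (- (of_real A * t0 + of_real B)) \<noteq> 0" "D > 0"
  shows "((\<lambda>t. (t - t0) ^ D * (poly p t * csigmoid (of_real A * t + of_real B) ^ d)) \<longlongrightarrow> 0) (at t0)"
proof -
  have "isCont (\<lambda>t. csigmoid (of_real A * t + of_real B)) t0"
    using assms(1) unfolding csigmoid_def by (intro continuous_intros) auto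
  then have "((\<lambda>t. (t - t0) ^ D * (poly p t * csigmoid (of_real A * t + of_real B) ^ d))
      \<longlongrightarrow> (t0 - t0) ^ D * (poly p t0 * csigmoid (of_real A * t0 + of_real B) ^ d)) (at t0)"
    by (intro tendsto_intros) (simp add: isCont_def)
  then show ?thesis using assms(2) by (simp add: power_0_left)
qed

section \<open>Linear independence of powers of shifted sigmoids\<close>

text \<open>Multiplying the relation by \<open>(t - t0) ^ Dm\<close>, every term tends to \<open>0\<close> as \<open>t \<rightarrow> t0\<close>
  except the one of neuron \<open>js\<close> and power \<open>Dm\<close>.\<close>

lemma csigmoid_relation_vanishes_at_pole:
  fixes q :: "complex poly" and p :: "'j \<Rightarrow> nat \<Rightarrow> complex poly"
  assumes fin: "finite J" and anz: "\<forall>j\<in>J. a j \<noteq> 0"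
    and rel: "\<forall>t\<in>UNIV - csigmoid_poles J a b. poly q t +
      (\<Sum>j\<in>J. \<Sum>d\<in>{1..D}. poly (p j d) t * csigmoid (of_real (a j) * t + of_real (b j)) ^ d) = 0"
    and js: "js \<in> J" and Dm: "Dm \<in> {1..D}" and top: "\<forall>d\<in>{Dm<..D}. p js d = 0"
    and pole: "1 + exp (- (of_real (a js) * t0 + of_real (b js))) = 0"
    and others: "\<forall>j\<in>J - {js}. 1 + exp (- (of_real (a j) * t0 + of_real (b j))) = 0 \<longrightarrow>
                   (\<forall>d\<in>{1..D}. p j d = 0)"
  shows "poly (p js Dm) t0 = 0"
proof -
  let ?s = "\<lambda>j t. csigmoid (of_real (a j) * t + of_real (b j))"
  let ?G = "\<lambda>t. poly q t + (\<Sum>j\<in>J. \<Sum>d\<in>{1..D}. poly (p j d) t * ?s j t ^ d)"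
  let ?lim = "poly (p js Dm) t0 / of_real (a js) ^ Dm"
  define L where "L j d = (if j = js \<and> d = Dm then ?lim else 0)" for j d
  have term_lim: "((\<lambda>t. (t - t0) ^ Dm * (poly (p j d) t * ?s j t ^ d)) \<longlongrightarrow> L j d) (at t0)"
    if j: "j \<in> J" and d: "d \<in> {1..D}" for j d
  proof (cases "j = js")
    case True
    then show ?thesis
      using tendsto_csigmoid_pole_power[OF anz[rule_format, OF js] pole, of d Dm "p js d"] top d
      by (cases "d \<le> Dm"; cases "d = Dm") (auto simp: L_def)
  next
    case False
    then have "(\<forall>d\<in>{1..D}. p j d = 0) \<or> 1 + exp (- (of_real (a j) * t0 + of_real (b j))) \<noteq> 0"
      using others j by blast
    then show ?thesis
      using tendsto_csigmoid_term_off_pole[of "a j" t0 "b j" Dm "p j d" d] Dm d False by (auto simp: L_def)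
  qed
  have "(\<Sum>d\<in>{1..D}. L j d) = (if j = js then ?lim else 0)" for j
    using Dm by (cases "j = js") (simp_all add: L_def)
  then have "(\<Sum>j\<in>J. \<Sum>d\<in>{1..D}. L j d) = ?lim" using fin js by simp
  moreover have "((\<lambda>t. (t - t0) ^ Dm * ?G t)
      \<longlongrightarrow> (t0 - t0) ^ Dm * poly q t0 + (\<Sum>j\<in>J. \<Sum>d\<in>{1..D}. L j d)) (at t0)"
    unfolding distrib_left sum_distrib_left by (intro tendsto_intros term_lim)
  ultimately have "((\<lambda>t. (t - t0) ^ Dm * ?G t) \<longlongrightarrow> ?lim) (at t0)"
    using Dm by (simp add: power_0_left)
  moreover have "\<forall>t\<in>UNIV - csigmoid_poles J a b. (t - t0) ^ Dm * ?G t = 0" using rel by simp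
  ultimately have "?lim = 0"
    by (intro limit_eq_0_if_vanishing_off_countable[OF countable_csigmoid_poles[OF fin anz]])
  then show ?thesis using anz js by simp
qed

lemma odd_multiples_not_Ints:
  fixes r :: real
  assumes "r \<notin> \<int>"
  obtains N :: nat where "N > 0" "\<And>M s. N dvd M \<Longrightarrow> r * of_nat (1 + 2 * s * M) \<notin> \<int>"
proof (cases "\<exists>N::nat. N > 0 \<and> r * of_nat N \<in> \<int>")
  case True
  then obtain N :: nat where N: "N > 0" "r * of_nat N \<in> \<int>" by blast
  show ?thesis
  proof (rule that[OF N(1)])
    fix M s :: nat assume "N dvd M"
    then obtain c where "M = N * c" by (auto elim: dvdE)
    then have "r = r * of_nat (1 + 2 * s * M) - of_nat (2 * s * c) * (r * of_nat N)"
      by (simp add: algebra_simps)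
    then show "r * of_nat (1 + 2 * s * M) \<notin> \<int>"
      using assms N(2) by (metis Ints_diff Ints_mult Ints_of_nat)
  qed
next
  case False
  show ?thesis
  proof (rule that[of 1])
    fix M s :: nat
    show "r * of_nat (1 + 2 * s * M) \<notin> \<int>"
      using False[unfolded not_ex, rule_format, of "1 + 2 * s * M"] by simp
  qed simp
qed

lemma exists_odd_progression_avoiding_Ints:
  fixes R :: "real set"
  assumes "finite R" "\<forall>r\<in>R. r \<notin> \<int>"
  obtains M :: nat where "M > 0" "\<forall>s r. r \<in> R \<longrightarrow> r * of_nat (1 + 2 * s * M) \<notin> \<int>"
proof -
  have "\<forall>r\<in>R. \<exists>N::nat. N > 0 \<and> (\<forall>M s. N dvd M \<longrightarrow> r * of_nat (1 + 2 * s * M) \<notin> \<int>)"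
  proof
    fix r assume "r \<in> R"
    then obtain N :: nat where "N > 0" "\<And>M s. N dvd M \<Longrightarrow> r * of_nat (1 + 2 * s * M) \<notin> \<int>"
      using odd_multiples_not_Ints assms(2) by blast
    then show "\<exists>N::nat. N > 0 \<and> (\<forall>M s. N dvd M \<longrightarrow> r * of_nat (1 + 2 * s * M) \<notin> \<int>)" by blast
  qed
  then obtain N where N: "\<forall>r\<in>R. N r > 0 \<and> (\<forall>M s. N r dvd M \<longrightarrow> r * of_nat (1 + 2 * s * M) \<notin> \<int>)"
    by metis
  show ?thesis
  proof (rule that[of "\<Prod>r\<in>R. N r"])
    show "(\<Prod>r\<in>R. N r) > 0" using N by (simp add: prod_pos)
    show "\<forall>s r. r \<in> R \<longrightarrow> r * of_nat (1 + 2 * s * (\<Prod>r\<in>R. N r)) \<notin> \<int>"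
      using N assms(1) dvd_prodI by blast
  qed
qed

definition distinct_up_to_sign :: "'j set \<Rightarrow> ('j \<Rightarrow> real) \<Rightarrow> ('j \<Rightarrow> real) \<Rightarrow> bool" where
  "distinct_up_to_sign J a b \<longleftrightarrow>
     (\<forall>i\<in>J. \<forall>j\<in>J. i \<noteq> j \<longrightarrow> \<not> (a i = a j \<and> b i = b j) \<and> \<not> (a i = - a j \<and> b i = - b j))"

lemma csigmoid_pole_unshared:
  assumes anz: "\<forall>j\<in>J. a j \<noteq> 0" and dist: "distinct_up_to_sign J a b" and js: "js \<in> J"
    and largest: "\<forall>j\<in>J. b j / a j = b js / a js \<longrightarrow> \<bar>a j\<bar> \<le> \<bar>a js\<bar>"
    and avoid: "\<forall>j\<in>J. b j / a j = b js / a js \<longrightarrow> \<bar>a j\<bar> < \<bar>a js\<bar> \<longrightarrow> a j / a js * of_int n \<notin> \<int>"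
    and j: "j \<in> J" "j \<noteq> js"
  shows "1 + exp (- (of_real (a j) * ((\<i> * pi * of_int n - of_real (b js)) / of_real (a js))
           + of_real (b j))) \<noteq> 0"
proof
  assume pole: "1 + exp (- (of_real (a j) * ((\<i> * pi * of_int n - of_real (b js)) / of_real (a js))
           + of_real (b j))) = 0"
  have A: "a js \<noteq> 0" and "a j \<noteq> 0" using anz js j by auto
  from csigmoid_pole_coincidence[OF A refl pole]
  have ratio: "a j * b js = b j * a js" and int: "a j / a js * of_int n \<in> \<int>" by simp_all
  have same_ratio: "b j / a j = b js / a js" using ratio A \<open>a j \<noteq> 0\<close> by (simp add: field_simps)
  show False
  proof (cases "\<bar>a j\<bar> = \<bar>a js\<bar>")
    case True
    then consider "a j = a js" | "a j = - a js" by (auto simp: abs_eq_iff)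
    moreover have "b j = a j * b js / a js" using ratio A by (simp add: field_simps)
    ultimately have "(a j = a js \<and> b j = b js) \<or> (a j = - a js \<and> b j = - b js)"
      using A by cases simp_all
    then show False using dist j js by (auto simp: distinct_up_to_sign_def)
  next
    case False
    then show False using avoid largest same_ratio j int by force
  qed
qed

text \<open>The poles of \<open>csigmoid (a js * t + b js)\<close> are the points \<open>(\<i> * pi * n - b js) / a js\<close>
  with \<open>n\<close> odd; for \<open>n = 1 + 2 * s * M\<close> with a suitable \<open>M\<close> no other neuron has a pole there.\<close>

lemma csigmoid_unshared_poles:
  assumes fin: "finite J" and anz: "\<forall>j\<in>J. a j \<noteq> 0" and dist: "distinct_up_to_sign J a b"
    and js: "js \<in> J" and largest: "\<forall>j\<in>J. b j / a j = b js / a js \<longrightarrow> \<bar>a j\<bar> \<le> \<bar>a js\<bar>"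
  obtains t :: "nat \<Rightarrow> complex" where "inj t"
    "\<And>s. 1 + exp (- (of_real (a js) * t s + of_real (b js))) = 0"
    "\<And>s j. j \<in> J - {js} \<Longrightarrow> 1 + exp (- (of_real (a j) * t s + of_real (b j))) \<noteq> 0"
proof -
  have A: "a js \<noteq> 0" using anz js by simp
  define R where "R = (\<lambda>j. a j / a js) ` {j\<in>J. b j / a j = b js / a js \<and> \<bar>a j\<bar> < \<bar>a js\<bar>}"
  have "finite R" using fin by (simp add: R_def)
  moreover have "\<forall>r\<in>R. r \<notin> \<int>"
  proof
    fix r assume "r \<in> R"
    then obtain j where "j \<in> J" "\<bar>a j\<bar> < \<bar>a js\<bar>" "r = a j / a js" by (auto simp: R_def)
    then have "r \<noteq> 0" "\<bar>r\<bar> < 1" using anz A by (auto simp: abs_div)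
    then show "r \<notin> \<int>" using Ints_nonzero_abs_less1 by blast
  qed
  ultimately obtain M :: nat where M: "M > 0" "\<forall>s r. r \<in> R \<longrightarrow> r * of_nat (1 + 2 * s * M) \<notin> \<int>"
    by (rule exists_odd_progression_avoiding_Ints) (rule that)
  define t where "t s = (\<i> * pi * of_int (int (1 + 2 * s * M)) - of_real (b js)) / of_real (a js)" for s
  show ?thesis
  proof
    show "inj t"
    proof (rule injI)
      fix s s' assume "t s = t s'"
      then have "Im (\<i> * pi * of_int (int (1 + 2 * s * M)))
          = Im (\<i> * pi * of_int (int (1 + 2 * s' * M)) :: complex)"
        using A by (simp add: t_def)
      then show "s = s'" using M(1) by simp
    qed
    fix s
    have "of_real (a js) * t s + of_real (b js) = \<i> * pi * of_int (int (1 + 2 * s * M))"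
      using A by (simp add: t_def)
    then have "- (of_real (a js) * t s + of_real (b js)) = \<i> * pi * of_int (2 * (- 1 - int s * int M) + 1)"
      by (simp add: algebra_simps)
    then show "1 + exp (- (of_real (a js) * t s + of_real (b js))) = 0"
      by (metis add_eq_0_iff exp_eq_minus_one_iff)
    show "1 + exp (- (of_real (a j) * t s + of_real (b j))) \<noteq> 0" if "j \<in> J - {js}" for j
      unfolding t_def
    proof (rule csigmoid_pole_unshared[OF anz dist js largest])
      show "\<forall>j\<in>J. b j / a j = b js / a js \<longrightarrow> \<bar>a j\<bar> < \<bar>a js\<bar> \<longrightarrow>
          a j / a js * of_int (int (1 + 2 * s * M)) \<notin> \<int>"
      proof (intro ballI impI)
        fix j assume "j \<in> J" "b j / a j = b js / a js" "\<bar>a j\<bar> < \<bar>a js\<bar>"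
        then have "a j / a js \<in> R" by (auto simp: R_def)
        from M(2)[rule_format, OF this, of s]
        show "a j / a js * of_int (int (1 + 2 * s * M)) \<notin> \<int>" by simp
      qed
      show "j \<in> J" "j \<noteq> js" using that by auto
    qed
  qed
qed

text \<open>Among the neurons with nonzero coefficients and the same ratio \<open>b j / a j\<close> as a given one,
  take one with the largest \<open>\<bar>a j\<bar>\<close>: its top coefficient polynomial vanishes at each of its
  infinitely many unshared poles.\<close>

lemma csigmoid_powers_independent:
  fixes q :: "complex poly" and p :: "'j \<Rightarrow> nat \<Rightarrow> complex poly"
  assumes fin: "finite J" and anz: "\<forall>j\<in>J. a j \<noteq> 0" and dist: "distinct_up_to_sign J a b"
    and rel: "\<forall>t\<in>UNIV - csigmoid_poles J a b. poly q t +
      (\<Sum>j\<in>J. \<Sum>d\<in>{1..D}. poly (p j d) t * csigmoid (of_real (a j) * t + of_real (b j)) ^ d) = 0"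
  shows "\<forall>j\<in>J. \<forall>d\<in>{1..D}. p j d = 0"
proof (rule ccontr)
  assume nonzero: "\<not> ?thesis"
  define J' where "J' = {j\<in>J. \<exists>d\<in>{1..D}. p j d \<noteq> 0}"
  obtain j0 where "j0 \<in> J'" using nonzero by (auto simp: J'_def)
  define T where "T = {j\<in>J'. b j / a j = b j0 / a j0}"
  have "finite T" "j0 \<in> T" using fin \<open>j0 \<in> J'\<close> by (auto simp: T_def J'_def)
  then have "Max ((\<lambda>j. \<bar>a j\<bar>) ` T) \<in> (\<lambda>j. \<bar>a j\<bar>) ` T" by (intro Max_in) auto
  then obtain js where js: "js \<in> T" and js_Max: "\<bar>a js\<bar> = Max ((\<lambda>j. \<bar>a j\<bar>) ` T)"
    by (metis imageE)
  have "\<forall>j\<in>T. \<bar>a j\<bar> \<le> \<bar>a js\<bar>" unfolding js_Max using \<open>finite T\<close> by simp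
  then have largest: "\<forall>j\<in>J'. b j / a j = b js / a js \<longrightarrow> \<bar>a j\<bar> \<le> \<bar>a js\<bar>"
    using js by (simp add: T_def)
  have jsJ: "js \<in> J" and jsJ': "js \<in> J'" using js by (simp_all add: T_def J'_def)
  have "finite {d\<in>{1..D}. p js d \<noteq> 0}" "{d\<in>{1..D}. p js d \<noteq> 0} \<noteq> {}"
    using jsJ' by (auto simp: J'_def)
  from finite_has_maximal[OF this] obtain Dm where Dm: "Dm \<in> {d\<in>{1..D}. p js d \<noteq> 0}"
    and Dm_max: "\<forall>d\<in>{d\<in>{1..D}. p js d \<noteq> 0}. Dm \<le> d \<longrightarrow> Dm = d" by blast
  have top: "\<forall>d\<in>{Dm<..D}. p js d = 0"
  proof (rule ballI, rule ccontr)
    fix d assume d: "d \<in> {Dm<..D}" and "p js d \<noteq> 0"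
    with Dm have "d \<in> {d\<in>{1..D}. p js d \<noteq> 0}" by auto
    from bspec[OF Dm_max this] d show False by simp
  qed
  have J': "finite J'" "\<forall>j\<in>J'. a j \<noteq> 0" "distinct_up_to_sign J' a b"
    using fin anz dist by (auto simp: J'_def distinct_up_to_sign_def)
  obtain t :: "nat \<Rightarrow> complex" where "inj t"
    and pole: "\<And>s. 1 + exp (- (of_real (a js) * t s + of_real (b js))) = 0"
    and unshared: "\<And>s j. j \<in> J' - {js} \<Longrightarrow> 1 + exp (- (of_real (a j) * t s + of_real (b j))) \<noteq> 0"
    by (rule csigmoid_unshared_poles[OF J' jsJ' largest]) (rule that)
  have "poly (p js Dm) (t s) = 0" for s
  proof (rule csigmoid_relation_vanishes_at_pole[OF fin anz rel jsJ _ top pole])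
    show "Dm \<in> {1..D}" using Dm by simp
    show "\<forall>j\<in>J - {js}. 1 + exp (- (of_real (a j) * t s + of_real (b j))) = 0 \<longrightarrow> (\<forall>d\<in>{1..D}. p j d = 0)"
      using unshared by (auto simp: J'_def)
  qed
  then have "infinite {z. poly (p js Dm) z = 0}"
    using range_inj_infinite[OF \<open>inj t\<close>]
    by (metis (mono_tags, lifting) finite_subset image_subset_iff mem_Collect_eq)
  then show False using poly_roots_finite Dm by blast
qed

lemma poly_map_poly_of_real:
  "poly (map_poly complex_of_real p) (of_real x) = of_real (poly p x)"
  by (induction p) (auto simp: map_poly_pCons)

lemma sigmoid_powers_independent:
  fixes q :: "real poly" and p :: "'j \<Rightarrow> nat \<Rightarrow> real poly"
  assumes fin: "finite J" and anz: "\<forall>j\<in>J. a j \<noteq> 0" and dist: "distinct_up_to_sign J a b"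
    and "\<delta> > 0"
    and rel: "\<forall>t. \<bar>t\<bar> < \<delta> \<longrightarrow>
      poly q t + (\<Sum>j\<in>J. \<Sum>d\<in>{1..D}. poly (p j d) t * sigmoid (a j * t + b j) ^ d) = 0"
  shows "\<forall>j\<in>J. \<forall>d\<in>{1..D}. p j d = 0"
proof -
  let ?c = "map_poly complex_of_real"
  let ?S = "UNIV - csigmoid_poles J a b"
  define G where "G z = poly (?c q) z +
    (\<Sum>j\<in>J. \<Sum>d\<in>{1..D}. poly (?c (p j d)) z * csigmoid (of_real (a j) * z + of_real (b j)) ^ d)" for z
  have G_of_real: "G (of_real t) =
      of_real (poly q t + (\<Sum>j\<in>J. \<Sum>d\<in>{1..D}. poly (p j d) t * sigmoid (a j * t + b j) ^ d))" for t
  proof -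
    have "csigmoid (of_real (a j) * of_real t + of_real (b j)) = of_real (sigmoid (a j * t + b j))" for j
      by (simp flip: csigmoid_of_real)
    then show ?thesis by (simp add: G_def poly_map_poly_of_real)
  qed
  have "G z = 0" if "z \<in> ?S" for z
  proof (rule analytic_continuation[of G ?S "of_real ` {-\<delta><..<\<delta>}" 0])
    show "G holomorphic_on ?S"
      unfolding G_def csigmoid_def by (intro holomorphic_intros) (auto simp: csigmoid_poles_def)
    show "open ?S" using fin by (rule open_csigmoid_poles_compl)
    show "connected ?S"
      using countable_csigmoid_poles[OF fin anz] by (intro connected_open_diff_countable) auto
    show "of_real ` {-\<delta><..<\<delta>} \<subseteq> ?S" "0 \<in> ?S"
      using of_real_notin_csigmoid_poles[of _ J a b] of_real_notin_csigmoid_poles[of 0 J a b] by auto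
    show "0 islimpt (of_real ` {-\<delta><..<\<delta>} :: complex set)"
    proof (rule islimpt_approachable[THEN iffD2], intro allI impI)
      fix e :: real assume "e > 0"
      then show "\<exists>x'\<in>of_real ` {-\<delta><..<\<delta>}. x' \<noteq> 0 \<and> dist x' (0::complex) < e"
        using \<open>\<delta> > 0\<close> by (intro bexI[of _ "complex_of_real (min \<delta> e / 2)"] imageI) (auto simp: dist_norm)
    qed
    show "G w = 0" if w: "w \<in> of_real ` {-\<delta><..<\<delta>}" for w
    proof -
      obtain t where t: "w = of_real t" "\<bar>t\<bar> < \<delta>" using w by (auto simp: abs_less_iff)
      show ?thesis unfolding t(1) G_of_real rel[rule_format, OF t(2)] by simp
    qed
  qed (use that in simp)
  then have "\<forall>j\<in>J. \<forall>d\<in>{1..D}. ?c (p j d) = 0"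
    by (intro csigmoid_powers_independent[OF fin anz dist, where q = "?c q"]) (simp add: G_def)
  then show ?thesis by (auto simp: map_poly_eq_0_iff)
qed

lemma poly_sigmoid_relation_coeffs_vanish:
  fixes q :: "real poly" and P :: "'j \<Rightarrow> nat \<Rightarrow> real poly" and R :: "nat \<Rightarrow> real poly"
  assumes fin: "finite J" and anz: "\<forall>j\<in>J. a j \<noteq> 0" and dist: "distinct_up_to_sign J a b"
    and "\<delta> > 0" and deg: "\<forall>k\<le>n. degree (R k) = k + 1"
    and rel: "\<forall>t. \<bar>t\<bar> < \<delta> \<longrightarrow>
      poly q t + (\<Sum>j\<in>J. \<Sum>k\<le>n. poly (P j k) t * poly (R k) (sigmoid (a j * t + b j))) = 0"
  shows "\<forall>j\<in>J. \<forall>k\<le>n. P j k = 0"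
proof -
  define p where "p j e = (\<Sum>k\<le>n. smult (coeff (R k) e) (P j k))" for j e
  have poly_p: "poly (p j e) t = (\<Sum>k\<le>n. coeff (R k) e * poly (P j k) t)" for j e t
    by (simp add: p_def poly_sum)
  have expand: "(\<Sum>k\<le>n. poly (P j k) t * poly (R k) s)
      = poly (p j 0) t + (\<Sum>e\<in>{1..n+1}. poly (p j e) t * s ^ e)" for j t s
  proof -
    have "(\<Sum>k\<le>n. poly (P j k) t * poly (R k) s) = (\<Sum>e\<le>n+1. poly (p j e) t * s ^ e)"
      using sum_poly_eq_sum_powers[of "{..n}" R "n + 1" "\<lambda>k. poly (P j k) t"] deg by (simp add: poly_p)
    also have "\<dots> = poly (p j 0) t + (\<Sum>e\<in>{1..n+1}. poly (p j e) t * s ^ e)"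
      by (subst atMost_atLeast0, subst sum.atLeast_Suc_atMost) simp_all
    finally show ?thesis .
  qed
  have "\<forall>j\<in>J. \<forall>e\<in>{1..n+1}. p j e = 0"
  proof (rule sigmoid_powers_independent[OF fin anz dist \<open>\<delta> > 0\<close>, where q = "q + (\<Sum>j\<in>J. p j 0)"],
      intro allI impI)
    fix t :: real assume "\<bar>t\<bar> < \<delta>"
    with rel show "poly (q + (\<Sum>j\<in>J. p j 0)) t +
        (\<Sum>j\<in>J. \<Sum>e\<in>{1..n+1}. poly (p j e) t * sigmoid (a j * t + b j) ^ e) = 0"
      by (simp only: expand poly_add poly_sum sum.distrib add.assoc)
  qed
  show ?thesis
  proof (intro ballI allI impI)
    fix j k assume "j \<in> J" "k \<le> n"
    have "poly (P j k) t = 0" for t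
    proof -
      have "\<forall>e\<in>{1..n+1}. (\<Sum>k\<le>n. coeff (R k) e * poly (P j k) t) = 0"
        using \<open>\<forall>j\<in>J. \<forall>e\<in>{1..n+1}. p j e = 0\<close> \<open>j \<in> J\<close> by (simp flip: poly_p)
      from graded_coeff_system_zero[OF deg this] show ?thesis using \<open>k \<le> n\<close> by blast
    qed
    then show "P j k = 0" using poly_all_0_iff_0 by blast
  qed
qed

section \<open>Polynomials in several variables\<close>

lemma finite_multi_idx: "finite V \<Longrightarrow> finite (multi_idx V d)"
  unfolding multi_idx_def by (rule finite_subset[OF _ finite_PiE[of V "\<lambda>_. {..d}"]]) auto

lemma poly_eval_cong: "(\<And>i. i \<in> V \<Longrightarrow> y i = y' i) \<Longrightarrow> poly_eval V d c y = poly_eval V d c y'"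
  unfolding poly_eval_def by (intro sum.cong refl arg_cong2[where f = "(*)"] prod.cong) auto

lemma bij_betw_multi_idx_insert:
  assumes "finite V" "a \<notin> V"
  shows "bij_betw (\<lambda>(e, \<beta>). \<beta>(a := e)) (SIGMA e:{..d}. multi_idx V (d - e)) (multi_idx (insert a V) d)"
proof (rule bij_betw_byWitness[where f' = "\<lambda>\<alpha>. (\<alpha> a, \<alpha>(a := undefined))"])
  have sum_upd: "sum (\<alpha>(a := e)) V = sum \<alpha> V" for \<alpha> :: "'a \<Rightarrow> nat" and e
    using assms(2) by (intro sum.cong) auto
  show "\<forall>p\<in>SIGMA e:{..d}. multi_idx V (d - e).
      (\<lambda>\<alpha>. (\<alpha> a, \<alpha>(a := undefined))) ((\<lambda>(e, \<beta>). \<beta>(a := e)) p) = p"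
    using assms(2) by (auto simp: multi_idx_def PiE_iff extensional_def)
  show "\<forall>\<alpha>\<in>multi_idx (insert a V) d. (\<lambda>(e, \<beta>). \<beta>(a := e)) (\<alpha> a, \<alpha>(a := undefined)) = \<alpha>"
    by simp
  show "(\<lambda>(e, \<beta>). \<beta>(a := e)) ` (SIGMA e:{..d}. multi_idx V (d - e)) \<subseteq> multi_idx (insert a V) d"
    using assms sum_upd by (fastforce simp: multi_idx_def PiE_iff extensional_def)
  show "(\<lambda>\<alpha>. (\<alpha> a, \<alpha>(a := undefined))) ` multi_idx (insert a V) d \<subseteq> (SIGMA e:{..d}. multi_idx V (d - e))"
  proof clarify
    fix \<alpha> assume \<alpha>: "\<alpha> \<in> multi_idx (insert a V) d"
    then have "\<alpha> a + sum \<alpha> V \<le> d" using assms by (simp add: multi_idx_def)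
    moreover have "\<alpha> i \<le> sum \<alpha> V" if "i \<in> V" for i
      using assms(1) that by (intro member_le_sum) auto
    ultimately show "\<alpha> a \<in> {..d} \<and> \<alpha>(a := undefined) \<in> multi_idx V (d - \<alpha> a)"
      using \<alpha> assms(2) sum_upd by (fastforce simp: multi_idx_def PiE_iff extensional_def)
  qed
qed

lemma poly_eval_insert:
  assumes "finite V" "a \<notin> V"
  shows "poly_eval (insert a V) d c y = (\<Sum>e\<le>d. y a ^ e * poly_eval V (d - e) (\<lambda>\<beta>. c (\<beta>(a := e))) y)"
proof -
  have prod_upd: "(\<Prod>i\<in>insert a V. y i ^ (\<beta>(a := e)) i) = y a ^ e * (\<Prod>i\<in>V. y i ^ \<beta> i)" for \<beta> e
  proof -
    have "(\<Prod>i\<in>V. y i ^ (\<beta>(a := e)) i) = (\<Prod>i\<in>V. y i ^ \<beta> i)"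
      using assms(2) by (intro prod.cong) auto
    then show ?thesis using assms by simp
  qed
  have "poly_eval (insert a V) d c y = (\<Sum>(e, \<beta>)\<in>(SIGMA e:{..d}. multi_idx V (d - e)).
      c (\<beta>(a := e)) * (\<Prod>i\<in>insert a V. y i ^ (\<beta>(a := e)) i))"
    unfolding poly_eval_def
    by (subst sum.reindex_bij_betw[OF bij_betw_multi_idx_insert[OF assms], symmetric])
      (simp add: case_prod_unfold)
  also have "\<dots> = (\<Sum>(e, \<beta>)\<in>(SIGMA e:{..d}. multi_idx V (d - e)).
      y a ^ e * (c (\<beta>(a := e)) * (\<Prod>i\<in>V. y i ^ \<beta> i)))"
    by (intro sum.cong refl) (auto simp del: fun_upd_apply simp: prod_upd)
  also have "\<dots> = (\<Sum>e\<le>d. \<Sum>\<beta>\<in>multi_idx V (d - e). y a ^ e * (c (\<beta>(a := e)) * (\<Prod>i\<in>V. y i ^ \<beta> i)))"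
    using assms(1) by (subst sum.Sigma) (auto simp: finite_multi_idx)
  also have "\<dots> = (\<Sum>e\<le>d. y a ^ e * poly_eval V (d - e) (\<lambda>\<beta>. c (\<beta>(a := e))) y)"
    unfolding poly_eval_def by (simp add: sum_distrib_left)
  finally show ?thesis .
qed

lemma coeffs_eq_0_if_vanishing_on_interval:
  fixes g :: "nat \<Rightarrow> real"
  assumes "\<epsilon> > 0" "\<forall>s. \<bar>s - s0\<bar> < \<epsilon> \<longrightarrow> (\<Sum>e\<le>d. s ^ e * g e) = 0"
  shows "\<forall>e\<le>d. g e = 0"
proof -
  define p where "p = (\<Sum>e\<le>d. monom (g e) e)"
  have "{s0 - \<epsilon><..<s0 + \<epsilon>} \<subseteq> {s. poly p s = 0}"
    using assms(2) by (auto simp: p_def poly_sum poly_monom mult.commute abs_less_iff)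
  moreover have "infinite {s0 - \<epsilon><..<s0 + \<epsilon>}"
    using assms(1) uncountable_open_interval[of "s0 - \<epsilon>" "s0 + \<epsilon>"] countable_finite by auto
  ultimately have "p = 0" using poly_roots_finite finite_subset by blast
  moreover have "coeff p e = g e" if "e \<le> d" for e
    using that by (simp add: p_def coeff_sum coeff_monom)
  ultimately show ?thesis by simp
qed

lemma poly_eval_vanishing_on_box:
  assumes "finite V" "\<epsilon> > 0"
    and "\<forall>y\<in>PiE V (\<lambda>_. UNIV). (\<forall>i\<in>V. \<bar>y i - x0 i\<bar> < \<epsilon>) \<longrightarrow> poly_eval V d c y = 0"
  shows "\<forall>\<alpha>\<in>multi_idx V d. c \<alpha> = 0"
  using assms(1,3)
proof (induction V arbitrary: d c rule: finite_induct)
  case empty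
  have idx: "multi_idx {} d = {\<lambda>_. undefined}" by (auto simp: multi_idx_def)
  have "poly_eval {} d c (\<lambda>_. undefined) = 0" using empty by simp
  then show ?case by (simp add: poly_eval_def idx)
next
  case (insert a V)
  define ce where "ce e = (\<lambda>\<beta>. c (\<beta>(a := e)))" for e
  have slices: "\<forall>e\<le>d. poly_eval V (d - e) (ce e) y = 0"
    if y: "y \<in> PiE V (\<lambda>_. UNIV)" "\<forall>i\<in>V. \<bar>y i - x0 i\<bar> < \<epsilon>" for y
  proof (rule coeffs_eq_0_if_vanishing_on_interval[OF assms(2), of "x0 a"], intro allI impI)
    fix s assume s: "\<bar>s - x0 a\<bar> < \<epsilon>"
    have "y(a := s) \<in> PiE (insert a V) (\<lambda>_. UNIV)" using y(1) by (auto simp: PiE_iff extensional_def)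
    moreover have "\<forall>i\<in>insert a V. \<bar>(y(a := s)) i - x0 i\<bar> < \<epsilon>" using y(2) s by auto
    ultimately have "poly_eval (insert a V) d c (y(a := s)) = 0" using insert.prems by blast
    moreover have "poly_eval V (d - e) (ce e) (y(a := s)) = poly_eval V (d - e) (ce e) y" for e
      using insert.hyps(2) by (intro poly_eval_cong) auto
    ultimately show "(\<Sum>e\<le>d. s ^ e * poly_eval V (d - e) (ce e) y) = 0"
      using poly_eval_insert[OF insert.hyps(1,2)] by (simp add: ce_def)
  qed
  have ce_zero: "\<forall>\<beta>\<in>multi_idx V (d - e). ce e \<beta> = 0" if "e \<le> d" for e
    by (rule insert.IH) (use slices that in blast)
  show ?case
  proof
    fix \<alpha> assume "\<alpha> \<in> multi_idx (insert a V) d"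
    then have "\<alpha> \<in> (\<lambda>(e, \<beta>). \<beta>(a := e)) ` (SIGMA e:{..d}. multi_idx V (d - e))"
      using bij_betw_imp_surj_on[OF bij_betw_multi_idx_insert[OF insert.hyps(1,2)]] by simp
    then obtain e \<beta> where "e \<le> d" "\<beta> \<in> multi_idx V (d - e)" "\<alpha> = \<beta>(a := e)" by auto
    then show "c \<alpha> = 0" using ce_zero by (simp add: ce_def)
  qed
qed

lemma box_subset_openin_product:
  assumes "openin (product_topology (\<lambda>_. euclideanreal) V) U" "x \<in> U" "finite V"
  obtains \<epsilon> where "\<epsilon> > 0" "\<forall>y\<in>PiE V (\<lambda>_. UNIV). (\<forall>i\<in>V. \<bar>y i - x i\<bar> < \<epsilon>) \<longrightarrow> y \<in> U"
proof -
  obtain W where W: "\<forall>i\<in>V. open (W i)" "x \<in> PiE V W" "PiE V W \<subseteq> U"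
    using assms(1,2) unfolding openin_product_topology_alt by auto
  have "\<forall>i\<in>V. \<exists>e>0. ball (x i) e \<subseteq> W i"
    using W(1,2) by (auto simp: PiE_iff open_contains_ball)
  then obtain e where e: "\<forall>i\<in>V. e i > 0 \<and> ball (x i) (e i) \<subseteq> W i" by metis
  define \<epsilon> where "\<epsilon> = Min (insert 1 (e ` V))"
  have "\<epsilon> > 0" using assms(3) e by (simp add: \<epsilon>_def)
  moreover have "y \<in> U" if "y \<in> PiE V (\<lambda>_. UNIV)" "\<forall>i\<in>V. \<bar>y i - x i\<bar> < \<epsilon>" for y
  proof -
    have "\<epsilon> \<le> e i" if "i \<in> V" for i using assms(3) that by (simp add: \<epsilon>_def)
    then have "y i \<in> W i" if "i \<in> V" for i
      using that \<open>\<forall>i\<in>V. \<bar>y i - x i\<bar> < \<epsilon>\<close> e by (force simp: dist_real_def abs_minus_commute)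
    then have "y \<in> PiE V W" using \<open>y \<in> PiE V (\<lambda>_. UNIV)\<close> by (auto simp: PiE_iff)
    then show ?thesis using W(3) by blast
  qed
  ultimately show ?thesis using that by blast
qed

lemma poly_eval_vanishing_on_openin:
  assumes "finite V" "openin (product_topology (\<lambda>_. euclideanreal) V) U" "x \<in> U"
    and "\<forall>y\<in>U. poly_eval V d c y = 0"
  shows "\<forall>\<alpha>\<in>multi_idx V d. c \<alpha> = 0"
proof -
  obtain \<epsilon> where "\<epsilon> > 0" "\<forall>y\<in>PiE V (\<lambda>_. UNIV). (\<forall>i\<in>V. \<bar>y i - x i\<bar> < \<epsilon>) \<longrightarrow> y \<in> U"
    using box_subset_openin_product[OF assms(2,3,1)] by blast
  then show ?thesis
    using assms(4) by (intro poly_eval_vanishing_on_box[OF assms(1) \<open>\<epsilon> > 0\<close>, of x]) blast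
qed

lemma poly_eval_constant:
  assumes "finite V"
  shows "poly_eval V d (\<lambda>\<alpha>. if \<alpha> = restrict (\<lambda>_. 0) V then r else 0) x = r"
proof -
  have "restrict (\<lambda>_. 0) V \<in> multi_idx V d" by (auto simp: multi_idx_def)
  then show ?thesis
    using finite_multi_idx[OF assms]
    by (simp add: poly_eval_def if_distrib[of "\<lambda>c. c * _"] cong: if_cong)
qed

definition line_poly ::
    "'v set \<Rightarrow> nat \<Rightarrow> (('v \<Rightarrow> nat) \<Rightarrow> real) \<Rightarrow> ('v \<Rightarrow> real) \<Rightarrow> ('v \<Rightarrow> real) \<Rightarrow> real poly" where
  "line_poly V d c x v = (\<Sum>\<alpha>\<in>multi_idx V d. smult (c \<alpha>) (\<Prod>i\<in>V. [:x i, v i:] ^ \<alpha> i))"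

lemma poly_line_poly: "poly (line_poly V d c x v) t = poly_eval V d c (\<lambda>i. x i + t * v i)"
  unfolding line_poly_def poly_eval_def by (simp add: poly_sum poly_prod algebra_simps)

section \<open>Restriction to a generic line\<close>

lemma exists_vector_not_orthogonal:
  fixes F :: "('v \<Rightarrow> real) set"
  assumes "finite F" "finite V" "\<forall>u\<in>F. \<exists>i\<in>V. u i \<noteq> 0"
  obtains v where "\<forall>u\<in>F. (\<Sum>i\<in>V. u i * v i) \<noteq> 0"
  using assms(1,3)
proof (induction F arbitrary: thesis rule: finite_induct)
  case empty
  then show ?case by blast
next
  case (insert u F)
  then obtain v where v: "\<forall>f\<in>F. (\<Sum>i\<in>V. f i * v i) \<noteq> 0" by auto
  define bad where "bad = insert 0 ((\<lambda>f. - (\<Sum>i\<in>V. f i * v i) / (\<Sum>i\<in>V. f i * u i)) ` F)"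
  have "finite bad" using insert.hyps(1) by (simp add: bad_def)
  then obtain s :: real where s: "s \<notin> bad" using ex_new_if_finite infinite_UNIV_char_0 by blast
  define v' where "v' i = v i + s * u i" for i
  have sum_v': "(\<Sum>i\<in>V. f i * v' i) = (\<Sum>i\<in>V. f i * v i) + s * (\<Sum>i\<in>V. f i * u i)" for f
    unfolding v'_def by (simp add: algebra_simps sum.distrib sum_distrib_left)
  obtain i0 where "i0 \<in> V" "u i0 \<noteq> 0" using insert.prems(2) by auto
  then have "(\<Sum>i\<in>V. u i * u i) > 0"
    using assms(2) by (intro sum_pos2[of _ i0]) (auto simp: not_square_less_zero zero_less_mult_iff)
  show ?case
  proof (cases "(\<Sum>i\<in>V. u i * v i) = 0")
    case False
    then show ?thesis using v insert.prems(1) by blast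
  next
    case True
    have "(\<Sum>i\<in>V. f i * v' i) \<noteq> 0" if f: "f \<in> insert u F" for f
    proof (cases "f = u")
      case True
      then show ?thesis
        using \<open>(\<Sum>i\<in>V. u i * v i) = 0\<close> \<open>(\<Sum>i\<in>V. u i * u i) > 0\<close> s sum_v'[of u] by (auto simp: bad_def)
    next
      case False
      then have "f \<in> F" using f by simp
      show ?thesis
      proof (cases "(\<Sum>i\<in>V. f i * u i) = 0")
        case True
        then show ?thesis using sum_v'[of f] v \<open>f \<in> F\<close> by simp
      next
        case False
        have "s \<noteq> - (\<Sum>i\<in>V. f i * v i) / (\<Sum>i\<in>V. f i * u i)" using s \<open>f \<in> F\<close> by (auto simp: bad_def)
        then show ?thesis using sum_v'[of f] False by (auto simp: field_simps)
      qed
    qed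
    then show ?thesis using insert.prems(1) by blast
  qed
qed

lemma distinct_up_to_sign_scale:
  assumes "c \<noteq> 0"
  shows "distinct_up_to_sign J (\<lambda>j. c * a j) (\<lambda>j. c * b j) \<longleftrightarrow> distinct_up_to_sign J a b"
proof -
  have "c * x = - (c * y) \<longleftrightarrow> x = - y" for x y
    using assms by (metis mult_minus_right mult_left_cancel)
  then show ?thesis using assms by (auto simp: distinct_up_to_sign_def)
qed

lemma exists_separating_direction:
  fixes w :: "'v \<times> 'v \<Rightarrow> real"
  assumes "finite V0" "finite V1"
    and nz: "\<forall>j\<in>V1. \<exists>i\<in>V0. w (i, j) \<noteq> 0"
    and dst: "\<forall>i\<in>V1. \<forall>j\<in>V1. i \<noteq> j \<longrightarrow>
      \<not> ((\<forall>l\<in>V0. w (l, i) = w (l, j)) \<and> \<beta> i = \<beta> j) \<and>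
      \<not> ((\<forall>l\<in>V0. w (l, i) = - w (l, j)) \<and> \<beta> i = - \<beta> j)"
  obtains v where "\<forall>j\<in>V1. (\<Sum>i\<in>V0. w (i, j) * v i) \<noteq> 0"
    and "\<And>x. distinct_up_to_sign V1 (\<lambda>j. \<Sum>i\<in>V0. w (i, j) * v i) (\<lambda>j. preact V0 w \<beta> j x)"
proof -
  define F where "F = (\<lambda>j l. w (l, j)) ` V1 \<union> (\<lambda>(i, j, s) l. w (l, i) - s * w (l, j)) `
    {(i, j, s). i \<in> V1 \<and> j \<in> V1 \<and> s \<in> {1, -1} \<and> (\<exists>l\<in>V0. w (l, i) \<noteq> s * w (l, j))}"
  have "finite F"
    unfolding F_def using assms(2)
    by (intro finite_UnI finite_imageI) (auto intro: finite_subset[of _ "V1 \<times> V1 \<times> {1, -1}"])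
  moreover have "\<forall>u\<in>F. \<exists>i\<in>V0. u i \<noteq> 0"
    unfolding F_def using nz by (auto simp: eq_neg_iff_add_eq_0)
  ultimately obtain v where v: "\<forall>u\<in>F. (\<Sum>i\<in>V0. u i * v i) \<noteq> 0"
    using exists_vector_not_orthogonal[OF _ assms(1)] by blast
  let ?a = "\<lambda>j. \<Sum>i\<in>V0. w (i, j) * v i"
  have separated: "\<not> (?a i = s * ?a j \<and> preact V0 w \<beta> i x = s * preact V0 w \<beta> j x)"
    if ij: "i \<in> V1" "j \<in> V1" "i \<noteq> j" and s: "s \<in> {1, -1}" for i j s x
  proof
    assume eq: "?a i = s * ?a j \<and> preact V0 w \<beta> i x = s * preact V0 w \<beta> j x"
    show False
    proof (cases "\<exists>l\<in>V0. w (l, i) \<noteq> s * w (l, j)")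
      case True
      then have "(\<lambda>l. w (l, i) - s * w (l, j)) \<in> F"
        using ij s unfolding F_def by (intro UnI2 image_eqI[where x = "(i, j, s)"]) auto
      from v[rule_format, OF this] have "(\<Sum>l\<in>V0. (w (l, i) - s * w (l, j)) * v l) \<noteq> 0" by simp
      moreover have "?a i - s * ?a j = (\<Sum>l\<in>V0. (w (l, i) - s * w (l, j)) * v l)"
        by (simp add: algebra_simps sum_subtractf sum_distrib_left)
      ultimately show False using eq by simp
    next
      case False
      then have "(\<Sum>l\<in>V0. x l * w (l, i)) = s * (\<Sum>l\<in>V0. x l * w (l, j))"
        by (simp add: sum_distrib_left mult_ac)
      then have "\<beta> i = s * \<beta> j" using eq by (simp add: preact_def algebra_simps)
      then show False using dst[rule_format, OF ij] s False by auto
    qed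
  qed
  show ?thesis
  proof
    show "\<forall>j\<in>V1. ?a j \<noteq> 0" using v by (auto simp: F_def)
    show "distinct_up_to_sign V1 ?a (\<lambda>j. preact V0 w \<beta> j x)" for x
      using separated[of _ _ 1 x] separated[of _ _ "-1" x] by (auto simp: distinct_up_to_sign_def)
  qed
qed

lemma openin_product_line:
  assumes "openin (product_topology (\<lambda>_. euclideanreal) V) U" "x \<in> U"
  obtains \<delta> where "\<delta> > 0" "\<And>t. \<bar>t\<bar> < \<delta> \<Longrightarrow> restrict (\<lambda>i. x i + t * v i) V \<in> U"
proof -
  let ?line = "\<lambda>t. restrict (\<lambda>i. x i + t * v i) V"
  have "continuous_map euclideanreal (product_topology (\<lambda>_. euclideanreal) V) ?line"
    by (auto simp: continuous_map_componentwise intro!: continuous_intros)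
  from openin_continuous_map_preimage[OF this assms(1)]
  have "open {t. ?line t \<in> U}" by simp
  moreover have "x \<in> PiE V (\<lambda>_. UNIV)" using openin_subset[OF assms(1)] assms(2) by auto
  then have "?line 0 = x" by (simp add: PiE_restrict)
  with assms(2) have "0 \<in> {t. ?line t \<in> U}" by simp
  ultimately obtain \<delta> where "\<delta> > 0" "ball 0 \<delta> \<subseteq> {t. ?line t \<in> U}"
    using open_contains_ball by blast
  show ?thesis
  proof (rule that[OF \<open>\<delta> > 0\<close>])
    fix t :: real assume "\<bar>t\<bar> < \<delta>"
    then have "t \<in> ball 0 \<delta>" by simp
    then show "?line t \<in> U" using \<open>ball 0 \<delta> \<subseteq> {t. ?line t \<in> U}\<close> by blast
  qed
qed

lemma preact_restrict_line:
  "preact V0 w \<beta> j (restrict (\<lambda>i. x i + t * v i) V0) = preact V0 w \<beta> j x + t * (\<Sum>i\<in>V0. w (i, j) * v i)"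
  by (simp add: preact_def algebra_simps sum.distrib sum_distrib_left)

text \<open>Restricted to the line through \<open>x\<close> in a direction separating the hidden neurons, the
  relation becomes one between powers of shifted sigmoids with polynomial coefficients.\<close>

lemma hidden_coeffs_vanish:
  fixes R :: "nat \<Rightarrow> real poly" and c :: "'v \<Rightarrow> nat \<Rightarrow> ('v \<Rightarrow> nat) \<Rightarrow> real"
    and w :: "'v \<times> 'v \<Rightarrow> real" and \<beta> :: "'v \<Rightarrow> real"
  assumes fin0: "finite V0" and fin1: "finite V1" and cc: "cc \<noteq> 0"
    and deg: "\<forall>k\<le>n. degree (R k) = k + 1"
    and nz: "\<forall>j\<in>V1. \<exists>i\<in>V0. w (i, j) \<noteq> 0"
    and dst: "\<forall>i\<in>V1. \<forall>j\<in>V1. i \<noteq> j \<longrightarrow>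
      \<not> ((\<forall>l\<in>V0. w (l, i) = w (l, j)) \<and> \<beta> i = \<beta> j) \<and>
      \<not> ((\<forall>l\<in>V0. w (l, i) = - w (l, j)) \<and> \<beta> i = - \<beta> j)"
    and U: "openin (product_topology (\<lambda>_. euclideanreal) V0) U" and "x \<in> U"
    and rel: "\<forall>y\<in>U. poly_eval V0 mE cE y + (\<Sum>j\<in>V1. \<Sum>k\<le>n.
      poly_eval V0 (m k) (c j k) y * poly (R k) (sigmoid (cc * preact V0 w \<beta> j y))) = 0"
  shows "\<forall>j\<in>V1. \<forall>k\<le>n. poly_eval V0 (m k) (c j k) x = 0"
proof -
  obtain v where v_nz: "\<forall>j\<in>V1. (\<Sum>i\<in>V0. w (i, j) * v i) \<noteq> 0"
    and v_dist: "\<And>y. distinct_up_to_sign V1 (\<lambda>j. \<Sum>i\<in>V0. w (i, j) * v i) (\<lambda>j. preact V0 w \<beta> j y)"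
    by (rule exists_separating_direction[OF fin0 fin1 nz dst]) (rule that)
  define a where "a j = cc * (\<Sum>i\<in>V0. w (i, j) * v i)" for j
  define b where "b j = cc * preact V0 w \<beta> j x" for j
  have anz: "\<forall>j\<in>V1. a j \<noteq> 0" using v_nz cc by (simp add: a_def)
  have dist: "distinct_up_to_sign V1 a b"
    using distinct_up_to_sign_scale[OF cc, of V1 "\<lambda>j. \<Sum>i\<in>V0. w (i, j) * v i" "\<lambda>j. preact V0 w \<beta> j x"]
      v_dist[of x]
    by (simp add: a_def[abs_def] b_def[abs_def])
  obtain \<delta> where "\<delta> > 0" and line: "\<And>t. \<bar>t\<bar> < \<delta> \<Longrightarrow> restrict (\<lambda>i. x i + t * v i) V0 \<in> U"
    using openin_product_line[OF U \<open>x \<in> U\<close>] by blast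
  have line_zero: "\<forall>j\<in>V1. \<forall>k\<le>n. line_poly V0 (m k) (c j k) x v = 0"
  proof (rule poly_sigmoid_relation_coeffs_vanish[OF fin1 anz dist \<open>\<delta> > 0\<close> deg,
      where q = "line_poly V0 mE cE x v"], intro allI impI)
    fix t :: real assume "\<bar>t\<bar> < \<delta>"
    have eval: "poly_eval V0 d c' (restrict (\<lambda>i. x i + t * v i) V0) = poly (line_poly V0 d c' x v) t"
      for d c'
      unfolding poly_line_poly by (rule poly_eval_cong) simp
    have preact: "cc * preact V0 w \<beta> j (restrict (\<lambda>i. x i + t * v i) V0) = a j * t + b j" for j
      by (simp add: preact_restrict_line a_def b_def algebra_simps)
    from rel[rule_format, OF line[OF \<open>\<bar>t\<bar> < \<delta>\<close>]]
    show "poly (line_poly V0 mE cE x v) t + (\<Sum>j\<in>V1. \<Sum>k\<le>n.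
        poly (line_poly V0 (m k) (c j k) x v) t * poly (R k) (sigmoid (a j * t + b j))) = 0"
      by (simp only: eval preact)
  qed
  show ?thesis
  proof (intro ballI allI impI)
    fix j k assume "j \<in> V1" "k \<le> n"
    then have "poly (line_poly V0 (m k) (c j k) x v) 0 = 0" using line_zero by simp
    then show "poly_eval V0 (m k) (c j k) x = 0" by (simp add: poly_line_poly)
  qed
qed

section \<open>The three inclusions\<close>

lemma efficient_set_subset_E0_set:
  assumes fin1: "finite V1" and act: "\<psi> = sigmoid \<or> \<psi> = tanh"
  shows "efficient_set \<psi> V0 V1 V2 X \<subseteq> E0_set V0 V1 V2"
proof clarify
  fix w \<beta> assume eff: "(w, \<beta>) \<in> efficient_set \<psi> V0 V1 V2 X"
  then have lin: "\<forall>j\<in>V1. lam j = 0"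
    if "\<forall>x\<in>X. l0 + (\<Sum>j\<in>V1. lam j * \<psi> (preact V0 w \<beta> j x)) = 0" for l0 lam
    using that by (auto simp: efficient_set_def)
  have "\<exists>i\<in>V0. w (i, j) \<noteq> 0" if j: "j \<in> V1" for j
  proof (rule ccontr)
    assume "\<not> (\<exists>i\<in>V0. w (i, j) \<noteq> 0)"
    then have "preact V0 w \<beta> j x = \<beta> j" for x by (simp add: preact_def)
    then have "\<forall>x\<in>X. - \<psi> (\<beta> j) + (\<Sum>k\<in>V1. of_bool (k = j) * \<psi> (preact V0 w \<beta> k x)) = 0"
      using fin1 j by simp
    from lin[OF this] j show False by fastforce
  qed
  moreover have "\<not> ((\<forall>l\<in>V0. w (l, i) = w (l, j)) \<and> \<beta> i = \<beta> j)"
    if ij: "i \<in> V1" "j \<in> V1" "i \<noteq> j" for i j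
  proof
    assume "(\<forall>l\<in>V0. w (l, i) = w (l, j)) \<and> \<beta> i = \<beta> j"
    then have "preact V0 w \<beta> i x = preact V0 w \<beta> j x" for x by (simp add: preact_def)
    then have "\<forall>x\<in>X. 0 + (\<Sum>k\<in>V1. (of_bool (k = i) - of_bool (k = j)) * \<psi> (preact V0 w \<beta> k x)) = 0"
      using fin1 ij by (simp add: left_diff_distrib sum_subtractf)
    from lin[OF this] ij show False by fastforce
  qed
  moreover have "\<not> ((\<forall>l\<in>V0. w (l, i) = - w (l, j)) \<and> \<beta> i = - \<beta> j)"
    if ij: "i \<in> V1" "j \<in> V1" "i \<noteq> j" for i j
  proof
    assume "(\<forall>l\<in>V0. w (l, i) = - w (l, j)) \<and> \<beta> i = - \<beta> j"
    then have "preact V0 w \<beta> i x = - preact V0 w \<beta> j x" for x by (simp add: preact_def sum_negf)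
    moreover obtain C where "\<And>z. \<psi> (- z) + \<psi> z = C" using activation_minus_add[OF act] by blast
    ultimately have "\<forall>x\<in>X. - C + (\<Sum>k\<in>V1. (of_bool (k = i) + of_bool (k = j)) * \<psi> (preact V0 w \<beta> k x)) = 0"
      using fin1 ij by (simp add: distrib_right sum.distrib)
    from lin[OF this] ij show False by fastforce
  qed
  ultimately show "(w, \<beta>) \<in> E0_set V0 V1 V2"
    using eff by (auto simp: E0_set_def efficient_set_def)
qed

lemma poly_efficient_set_subset_efficient_set:
  assumes fin0: "finite V0"
  shows "poly_efficient_set \<psi> n mE m V0 V1 V2 X \<subseteq> efficient_set \<psi> V0 V1 V2 X"
proof clarify
  fix w \<beta> assume peff: "(w, \<beta>) \<in> poly_efficient_set \<psi> n mE m V0 V1 V2 X"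
  let ?zero = "restrict (\<lambda>_. 0 :: nat) V0"
  have "l0 = 0 \<and> (\<forall>j\<in>V1. lam j = 0)"
    if rel: "\<forall>x\<in>X. l0 + (\<Sum>j\<in>V1. lam j * \<psi> (preact V0 w \<beta> j x)) = 0" for l0 lam
  proof -
    define cE where "cE = (\<lambda>\<alpha>. if \<alpha> = ?zero then l0 else 0)"
    define c where "c j k = (\<lambda>\<alpha>. if \<alpha> = ?zero then of_bool (k = (0::nat)) * lam j else 0)" for j k
    have "poly_eval V0 mE cE x = l0" "poly_eval V0 (m k) (c j k) x = of_bool (k = 0) * lam j" for x j k
      unfolding cE_def c_def by (simp_all only: poly_eval_constant[OF fin0])
    then have "\<forall>x\<in>X. poly_eval V0 mE cE x + (\<Sum>j\<in>V1. \<Sum>k\<le>n.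
        poly_eval V0 (m k) (c j k) x * (deriv ^^ k) \<psi> (preact V0 w \<beta> j x)) = 0"
      using rel by (simp add: mult.assoc)
    then have "cE ?zero = 0 \<and> (\<forall>j\<in>V1. c j 0 ?zero = 0)"
      using peff by (auto simp: poly_efficient_set_def multi_idx_def)
    then show ?thesis by (simp add: cE_def c_def)
  qed
  then show "(w, \<beta>) \<in> efficient_set \<psi> V0 V1 V2 X"
    using peff by (auto simp: efficient_set_def poly_efficient_set_def)
qed

lemma E0_set_subset_poly_efficient_set:
  assumes fin0: "finite V0" and fin1: "finite V1" and act: "\<psi> = sigmoid \<or> \<psi> = tanh"
    and U: "openin (product_topology (\<lambda>_. euclideanreal) V0) U" "U \<noteq> {}" "U \<subseteq> X"
  shows "E0_set V0 V1 V2 \<subseteq> poly_efficient_set \<psi> n mE m V0 V1 V2 X"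
proof clarify
  fix w \<beta> assume E0: "(w, \<beta>) \<in> E0_set V0 V1 V2"
  then have nz: "\<forall>j\<in>V1. \<exists>i\<in>V0. w (i, j) \<noteq> 0"
    and dst: "\<forall>i\<in>V1. \<forall>j\<in>V1. i \<noteq> j \<longrightarrow>
      \<not> ((\<forall>l\<in>V0. w (l, i) = w (l, j)) \<and> \<beta> i = \<beta> j) \<and>
      \<not> ((\<forall>l\<in>V0. w (l, i) = - w (l, j)) \<and> \<beta> i = - \<beta> j)"
    by (auto simp: E0_set_def)
  obtain cc Q where cc: "cc \<noteq> 0" and "degree Q = 1" and \<psi>: "\<psi> = (\<lambda>x. poly Q (sigmoid (cc * x)))"
    using activation_eq_poly_sigmoid[OF act] by blast
  then have deg: "\<forall>k\<le>n. degree (sigmoid_deriv_poly cc Q k) = k + 1"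
    by (simp add: degree_sigmoid_deriv_poly)
  obtain x0 where "x0 \<in> U" using U(2) by blast
  have "(\<forall>\<alpha>\<in>multi_idx V0 mE. cE \<alpha> = 0) \<and> (\<forall>j\<in>V1. \<forall>k\<le>n. \<forall>\<alpha>\<in>multi_idx V0 (m k). c j k \<alpha> = 0)"
    if rel: "\<forall>x\<in>X. poly_eval V0 mE cE x + (\<Sum>j\<in>V1. \<Sum>k\<le>n.
        poly_eval V0 (m k) (c j k) x * (deriv ^^ k) \<psi> (preact V0 w \<beta> j x)) = 0" for cE c
  proof -
    have rel_U: "\<forall>y\<in>U. poly_eval V0 mE cE y + (\<Sum>j\<in>V1. \<Sum>k\<le>n. poly_eval V0 (m k) (c j k) y
        * poly (sigmoid_deriv_poly cc Q k) (sigmoid (cc * preact V0 w \<beta> j y))) = 0"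
      using rel U(3) unfolding \<psi> deriv_iter_poly_sigmoid by blast
    have hidden: "\<forall>j\<in>V1. \<forall>k\<le>n. poly_eval V0 (m k) (c j k) y = 0" if "y \<in> U" for y
      by (rule hidden_coeffs_vanish[OF fin0 fin1 cc deg nz dst U(1) that rel_U])
    then have "\<forall>y\<in>U. poly_eval V0 mE cE y = 0" using rel_U by simp
    note coeffs_vanish = poly_eval_vanishing_on_openin[OF fin0 U(1) \<open>x0 \<in> U\<close>]
    show ?thesis
    proof (intro conjI ballI allI impI)
      show "cE \<alpha> = 0" if "\<alpha> \<in> multi_idx V0 mE" for \<alpha>
        using coeffs_vanish[OF \<open>\<forall>y\<in>U. poly_eval V0 mE cE y = 0\<close>] that by blast
      fix j k \<alpha> assume "j \<in> V1" "k \<le> n" "\<alpha> \<in> multi_idx V0 (m k)"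
      then show "c j k \<alpha> = 0" using coeffs_vanish[of "m k" "c j k"] hidden by blast
    qed
  qed
  moreover have "\<forall>k<n. (deriv ^^ k) \<psi> differentiable_on UNIV"
    unfolding \<psi> by (simp add: differentiable_deriv_iter_poly_sigmoid)
  ultimately show "(w, \<beta>) \<in> poly_efficient_set \<psi> n mE m V0 V1 V2 X"
    using E0 by (auto simp: E0_set_def poly_efficient_set_def)
qed

theorem theorem3p3:
  fixes V0 V1 V2 :: "'v set" and \<psi> :: "real \<Rightarrow> real" and X :: "('v \<Rightarrow> real) set"
    and n mE :: nat and m :: "nat \<Rightarrow> nat"
  assumes "finite V0" "finite V1" "finite V2"
    and "V0 \<inter> V1 = {}" "V0 \<inter> V2 = {}" "V1 \<inter> V2 = {}"
    and "\<psi> = sigmoid \<or> \<psi> = tanh"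
    and "X \<subseteq> topspace (product_topology (\<lambda>_. euclideanreal) V0)"
    and "\<exists>U. openin (product_topology (\<lambda>_. euclideanreal) V0) U \<and> U \<noteq> {} \<and> U \<subseteq> X"
  shows "efficient_set \<psi> V0 V1 V2 X = poly_efficient_set \<psi> n mE m V0 V1 V2 X
       \<and> poly_efficient_set \<psi> n mE m V0 V1 V2 X = E0_set V0 V1 V2"
proof -
  obtain U where U: "openin (product_topology (\<lambda>_. euclideanreal) V0) U" "U \<noteq> {}" "U \<subseteq> X"
    using assms(9) by blast
  have "efficient_set \<psi> V0 V1 V2 X \<subseteq> E0_set V0 V1 V2"
    by (rule efficient_set_subset_E0_set[OF assms(2,7)])
  moreover have "E0_set V0 V1 V2 \<subseteq> poly_efficient_set \<psi> n mE m V0 V1 V2 X"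
    by (rule E0_set_subset_poly_efficient_set[OF assms(1,2,7) U])
  moreover have "poly_efficient_set \<psi> n mE m V0 V1 V2 X \<subseteq> efficient_set \<psi> V0 V1 V2 X"
    by (rule poly_efficient_set_subset_efficient_set[OF assms(1)])
  ultimately show ?thesis by blast
qed

end
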